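(* Let $(X,\|\cdot\|)$ be a normed linear space over $\mathbb{R}$ or $\mathbb{C}$, let $x_1,\dots,x_n\in X$, $a\in X\setminus\{0\}$, and let $p_1,\dots,p_n\ge 0$ with $\sum_{j=1}^n p_j=1$. Then $$\Big\|\sum_{j=1}^n p_jx_j\Big\|\,\|a\|+\frac12\sum_{j=1}^n p_j\|x_j-a\|^2\ \ge\ \frac12\|a\|^2.$$ The constant $\tfrac12$ on the right-hand side is best possible: if $X\ne\{0\}$, there is no constant $D>\tfrac12$ such that $\big\|\sum_{j=1}^n p_jx_j\big\|\,\|a\|+\frac12\sum_{j=1}^n p_j\|x_j-a\|^2\ge D\|a\|^2$ holds for all $n\ge1$, all $x_j\in X$, all $p_j\ge0$ with $\sum_j p_j=1$ and all $a\in X\setminus\{0\}$. *)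

theory Defs
  imports "HOL-Analysis.Analysis"
begin

end

theory Submission
  imports Defs
begin

text \<open>Let \<open>y = \<Sum>\<^sub>j p\<^sub>j x\<^sub>j\<close> and \<open>t = \<parallel>y - a\<parallel>\<close>. The triangle inequality gives
  \<open>\<parallel>y\<parallel> \<ge> \<parallel>a\<parallel> - t\<close>, and convexity of the norm and of the square give
  \<open>t\<^sup>2 \<le> \<Sum>\<^sub>j p\<^sub>j \<parallel>x\<^sub>j - a\<parallel>\<^sup>2\<close>. Hence the left-hand side is at least
  \<open>(\<parallel>a\<parallel> - t) \<parallel>a\<parallel> + t\<^sup>2/2 = \<parallel>a\<parallel>\<^sup>2/2 + (\<parallel>a\<parallel> - t)\<^sup>2/2\<close>.
  Equality holds for \<open>n = 1\<close> and \<open>x\<^sub>1 = 0\<close>, so \<open>1/2\<close> cannot be improved.\<close>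

lemma weighted_mean_squared_le:
  fixes p s :: "'i \<Rightarrow> real"
  assumes "\<And>j. j \<in> A \<Longrightarrow> p j \<ge> 0" and "(\<Sum>j\<in>A. p j) = 1"
  shows "(\<Sum>j\<in>A. p j * s j)\<^sup>2 \<le> (\<Sum>j\<in>A. p j * (s j)\<^sup>2)"
proof -
  define m where "m = (\<Sum>j\<in>A. p j * s j)"
  have "0 \<le> (\<Sum>j\<in>A. p j * (s j - m)\<^sup>2)"
    using assms(1) by (intro sum_nonneg) auto
  also have "\<dots> = (\<Sum>j\<in>A. p j * (s j)\<^sup>2) - 2 * m * (\<Sum>j\<in>A. p j * s j) + m\<^sup>2 * (\<Sum>j\<in>A. p j)"
    by (simp add: power2_eq_square algebra_simps sum.distrib sum_subtractf
        sum_distrib_left sum_distrib_right)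
  also have "\<dots> = (\<Sum>j\<in>A. p j * (s j)\<^sup>2) - m\<^sup>2"
    using assms(2) by (simp add: m_def power2_eq_square)
  finally show ?thesis by (simp add: m_def)
qed

lemma norm_convex_combination_diff_le:
  fixes x :: "'i \<Rightarrow> 'a::real_normed_vector"
  assumes "\<And>j. j \<in> A \<Longrightarrow> p j \<ge> 0" and "(\<Sum>j\<in>A. p j) = 1"
  shows "norm ((\<Sum>j\<in>A. p j *\<^sub>R x j) - a) \<le> (\<Sum>j\<in>A. p j * norm (x j - a))"
proof -
  have "(\<Sum>j\<in>A. p j *\<^sub>R x j) - a = (\<Sum>j\<in>A. p j *\<^sub>R (x j - a))"
    using assms(2) by (simp add: scaleR_diff_right sum_subtractf scaleR_sum_left[symmetric])
  also have "norm \<dots> \<le> (\<Sum>j\<in>A. norm (p j *\<^sub>R (x j - a)))"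
    by (rule norm_sum)
  also have "\<dots> = (\<Sum>j\<in>A. p j * norm (x j - a))"
    using assms(1) by (intro sum.cong) auto
  finally show ?thesis .
qed

lemma norm_convex_combination_lower_bound:
  fixes x :: "'i \<Rightarrow> 'a::real_normed_vector"
  assumes "\<And>j. j \<in> A \<Longrightarrow> p j \<ge> 0" and "(\<Sum>j\<in>A. p j) = 1"
  shows "norm (\<Sum>j\<in>A. p j *\<^sub>R x j) * norm a + (1/2) * (\<Sum>j\<in>A. p j * (norm (x j - a))\<^sup>2)
           \<ge> (1/2) * (norm a)\<^sup>2"
proof -
  define y where "y = (\<Sum>j\<in>A. p j *\<^sub>R x j)"
  define t where "t = norm (y - a)"
  have "t\<^sup>2 \<le> (\<Sum>j\<in>A. p j * norm (x j - a))\<^sup>2"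
    using norm_convex_combination_diff_le[OF assms, of x a]
    by (simp add: t_def y_def power_mono)
  also have "\<dots> \<le> (\<Sum>j\<in>A. p j * (norm (x j - a))\<^sup>2)"
    using assms by (rule weighted_mean_squared_le)
  finally have t_sq: "t\<^sup>2 \<le> (\<Sum>j\<in>A. p j * (norm (x j - a))\<^sup>2)" .
  have "norm a - t \<le> norm y"
    using norm_triangle_ineq2[of a y] norm_minus_commute[of y a] by (simp add: t_def)
  then have "(norm a - t) * norm a \<le> norm y * norm a"
    by (simp add: mult_right_mono)
  moreover have "(norm a - t) * norm a + t\<^sup>2 / 2 = (norm a)\<^sup>2 / 2 + (norm a - t)\<^sup>2 / 2"
    by (simp add: power2_diff power2_eq_square field_simps)
  ultimately have "(1/2) * (norm a)\<^sup>2 \<le> norm y * norm a + (1/2) * (\<Sum>j\<in>A. p j * (norm (x j - a))\<^sup>2)"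
    using t_sq zero_le_power2[of "norm a - t"] by linarith
  then show ?thesis
    by (simp only: y_def)
qed

theorem theorem2p1:
  fixes dummy :: "'a::real_normed_vector"
  shows "(\<forall>(n::nat) (x::nat \<Rightarrow> 'a) (p::nat \<Rightarrow> real) (a::'a).
            a \<noteq> 0 \<and> (\<forall>j\<in>{1..n}. p j \<ge> 0) \<and> (\<Sum>j=1..n. p j) = 1 \<longrightarrow>
            norm (\<Sum>j=1..n. p j *\<^sub>R x j) * norm a
              + (1/2) * (\<Sum>j=1..n. p j * (norm (x j - a))\<^sup>2) \<ge> (1/2) * (norm a)\<^sup>2)
       \<and> ((\<exists>v::'a. v \<noteq> 0) \<longrightarrow>
            \<not> (\<exists>D::real. D > 1/2 \<and>
                 (\<forall>(n::nat) (x::nat \<Rightarrow> 'a) (p::nat \<Rightarrow> real) (a::'a).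
                    n \<ge> 1 \<and> a \<noteq> 0 \<and> (\<forall>j\<in>{1..n}. p j \<ge> 0) \<and> (\<Sum>j=1..n. p j) = 1 \<longrightarrow>
                    norm (\<Sum>j=1..n. p j *\<^sub>R x j) * norm a
                      + (1/2) * (\<Sum>j=1..n. p j * (norm (x j - a))\<^sup>2) \<ge> D * (norm a)\<^sup>2)))"
proof (intro conjI impI allI notI; elim exE conjE)
  show "norm (\<Sum>j=1..n. p j *\<^sub>R x j) * norm a
      + (1/2) * (\<Sum>j=1..n. p j * (norm (x j - a))\<^sup>2) \<ge> (1/2) * (norm a)\<^sup>2"
    if "\<forall>j\<in>{1..n}. p j \<ge> 0" and "(\<Sum>j=1..n. p j) = 1"
    for n and x :: "nat \<Rightarrow> 'a" and p :: "nat \<Rightarrow> real" and a :: 'a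
    using that by (intro norm_convex_combination_lower_bound) auto
next
  fix v :: 'a and D :: real
  assume "v \<noteq> 0" and "D > 1/2" and bound: "\<forall>(n::nat) (x::nat \<Rightarrow> 'a) (p::nat \<Rightarrow> real) (a::'a).
      n \<ge> 1 \<and> a \<noteq> 0 \<and> (\<forall>j\<in>{1..n}. p j \<ge> 0) \<and> (\<Sum>j=1..n. p j) = 1 \<longrightarrow>
      norm (\<Sum>j=1..n. p j *\<^sub>R x j) * norm a
        + (1/2) * (\<Sum>j=1..n. p j * (norm (x j - a))\<^sup>2) \<ge> D * (norm a)\<^sup>2"
  have "D * (norm v)\<^sup>2 \<le> (1/2) * (norm v)\<^sup>2"
    using bound[rule_format, of 1 v "\<lambda>_. 1" "\<lambda>_. 0"] \<open>v \<noteq> 0\<close> by simp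
  with \<open>D > 1/2\<close> \<open>v \<noteq> 0\<close> show False by simp
qed

end
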